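(* Let $n$ be an odd positive integer and let $i_1,\dots,i_s$ with $0\le i_1<\dots<i_s\le n-1$ be integers no two of which belong to the same cyclotomic coset modulo $n$. Let $g$ be a positive integer with $(2^g-1)\mid n$. Suppose there exists an integer $r$ with $0<r<2^g-1$ and $\gcd(r,2^g-1)=1$ such that all of $i_1,\dots,i_s$ lie in $\mathcal{C}_r^{(2^g-1)}$, i.e. each $i_t \bmod (2^g-1)$ belongs to $\{r2^k\bmod(2^g-1):k\ge0\}$. Then the binary cyclic code of length $n$ with generator polynomial $\prod_{t=1}^{s}M_{i_t}(x)$ has minimum distance $d\le 3$. If moreover $\gcd(n,i_1,\dots,i_s)=1$, then $d=3$.
   Context: For odd $n$, $\alpha$ denotes a primitive $n$th root of unity in an extension field of $\mathbb{F}_2$. The cyclotomic coset of $r$ modulo $N$ (over $\mathbb{F}_2$) is $\mathcal{C}_r^{(N)}=\{r2^k \bmod N: k=0,1,\dots\}$. $M_i(x)=\prod_{t\in\mathcal{C}_i^{(n)}}(x-\alpha^t)\in\mathbb{F}_2[x]$ is the minimal polynomial of $\alpha^i$. The binary cyclic code with generator polynomial $G(x)\mid x^n-1$ is $\{c(x)\in\mathbb{F}_2[x]/(x^n-1): G(x)\mid c(x)\}$. *)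

theory Defs
  imports "HOL-Computational_Algebra.Polynomial" "HOL-Library.Z2"
begin

definition cyc_coset :: "nat \<Rightarrow> nat \<Rightarrow> nat set" where
  "cyc_coset r N = {r * 2 ^ k mod N | k. True}"

definition prim_root :: "'a::field \<Rightarrow> nat \<Rightarrow> bool" where
  "prim_root \<alpha> n \<longleftrightarrow> \<alpha> ^ n = 1 \<and> (\<forall>k. 0 < k \<and> k < n \<longrightarrow> \<alpha> ^ k \<noteq> 1)"

definition min_poly :: "'a::field \<Rightarrow> nat \<Rightarrow> nat \<Rightarrow> 'a poly" where
  "min_poly \<alpha> n i = (\<Prod>t\<in>cyc_coset i n. [:- (\<alpha> ^ t), 1:])"

text \<open>Binary cyclic code of length n with generator polynomial G (a polynomial with
  coefficients in F_2, here given via its image in the extension field):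
  codewords are the F_2-polynomials of degree < n (representatives of F_2[x]/(x^n-1))
  divisible by G.\<close>
definition cyclic_code :: "nat \<Rightarrow> 'a::field poly \<Rightarrow> bit poly set" where
  "cyclic_code n G = {c. degree c < n \<and> G dvd map_poly of_bit c}"

definition weight :: "bit poly \<Rightarrow> nat" where
  "weight c = card {k. coeff c k \<noteq> 0}"

definition min_dist :: "bit poly set \<Rightarrow> nat" where
  "min_dist C = (LEAST w. \<exists>c\<in>C. c \<noteq> 0 \<and> weight c = w)"

end

theory Submission
  imports Defs "HOL-Number_Theory.Cong"
begin

text \<open>
  Write \<open>n = m * N\<close> with \<open>m = 2 ^ g - 1\<close>. Then \<open>\<gamma> = \<alpha> ^ (N * r)\<close> is a primitive
  \<open>m\<close>-th root of unity; the \<open>m\<close>-th roots of unity together with \<open>0\<close> form the field of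
  order \<open>2 ^ g\<close>, so \<open>1 + \<gamma> = \<gamma> ^ b\<close> for some \<open>1 < b < m\<close>. The trinomial
  \<open>1 + x ^ N + x ^ (b * N)\<close> vanishes at \<open>\<alpha> ^ r\<close>, hence, having binary coefficients, at every
  \<open>\<alpha> ^ (r * 2 ^ k)\<close>; since \<open>\<alpha> ^ (N * j)\<close> depends only on \<open>j mod m\<close>, it vanishes at \<open>\<alpha> ^ j\<close>
  for all \<open>j\<close> in the cosets of the \<open>i t\<close>, and is a codeword of weight 3.
  A codeword \<open>x ^ a\<close> or \<open>x ^ a + x ^ b\<close> would force \<open>\<alpha> ^ (i t * (b - a)) = 1\<close> for all \<open>t\<close>,
  i.e. \<open>n\<close> divides \<open>(b - a) * gcd(n, i 1, \<dots>, i s) = b - a < n\<close>.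
\<close>

\<comment> \<open>Otherwise simp turns \<open>coeff c k \<noteq> 0\<close> into \<open>coeff c k = 1\<close> and the support sets below no longer match.\<close>
declare bit_not_zero_iff [simp del]

lemma prim_root_nonzero:
  assumes "prim_root \<alpha> n" "0 < n"
  shows "\<alpha> \<noteq> 0"
  using assms by (auto simp: prim_root_def power_0_left)

lemma prim_root_pow_eq_1_iff:
  assumes "prim_root \<alpha> n" "0 < n"
  shows "\<alpha> ^ k = 1 \<longleftrightarrow> n dvd k"
proof -
  have "\<alpha> ^ k = (\<alpha> ^ n) ^ (k div n) * \<alpha> ^ (k mod n)"
    by (simp flip: power_mult power_add)
  then have "\<alpha> ^ k = \<alpha> ^ (k mod n)"
    using assms(1) by (simp add: prim_root_def)
  moreover have "k mod n < n"
    using assms(2) by simp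
  ultimately show ?thesis
    using assms(1) unfolding prim_root_def by (auto simp: dvd_eq_mod_eq_0)
qed

lemma prim_root_pow_eq_pow_iff:
  assumes "prim_root \<alpha> n" "0 < n"
  shows "\<alpha> ^ j = \<alpha> ^ k \<longleftrightarrow> [j = k] (mod n)"
proof -
  have *: "\<alpha> ^ j = \<alpha> ^ k \<longleftrightarrow> [j = k] (mod n)" if "j \<le> k" for j k
  proof -
    have "\<alpha> ^ k = \<alpha> ^ j * \<alpha> ^ (k - j)"
      using that by (simp flip: power_add)
    then have "\<alpha> ^ j = \<alpha> ^ k \<longleftrightarrow> \<alpha> ^ (k - j) = 1"
      using prim_root_nonzero[OF assms] by auto
    also have "\<dots> \<longleftrightarrow> [j = k] (mod n)"
      using that by (metis prim_root_pow_eq_1_iff[OF assms] cong_altdef_nat cong_sym)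
    finally show ?thesis .
  qed
  show ?thesis
    using *[of j k] *[of k j] by (metis cong_sym_eq nat_le_linear)
qed

lemma prim_root_iff_pow_eq_1:
  assumes "0 < n" "\<And>k. \<alpha> ^ k = 1 \<longleftrightarrow> n dvd k"
  shows "prim_root \<alpha> n"
  using assms by (auto simp: prim_root_def dest: dvd_imp_le)

lemma prim_root_power_coprime:
  assumes "prim_root \<alpha> (m * N)" "0 < m * N" "coprime r m"
  shows "prim_root (\<alpha> ^ (N * r)) m"
proof (rule prim_root_iff_pow_eq_1)
  show "0 < m"
    using assms(2) by simp
  fix k
  have "(\<alpha> ^ (N * r)) ^ k = 1 \<longleftrightarrow> m * N dvd N * (r * k)"
    by (simp add: prim_root_pow_eq_1_iff[OF assms(1,2)] mult.assoc flip: power_mult)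
  also have "\<dots> \<longleftrightarrow> m dvd k"
    using assms(2,3) by (simp add: mult.commute coprime_commute coprime_dvd_mult_left_iff)
  finally show "(\<alpha> ^ (N * r)) ^ k = 1 \<longleftrightarrow> m dvd k" .
qed

lemma inj_on_prim_root_power:
  assumes "prim_root \<alpha> n" "0 < n"
  shows "inj_on (\<lambda>k. \<alpha> ^ k) {..<n}"
  using prim_root_pow_eq_pow_iff[OF assms] by (auto intro!: inj_onI cong_less_modulus_unique_nat)

lemma roots_of_unity_eq_prim_root_powers:
  fixes \<gamma> :: "'a::field"
  assumes "prim_root \<gamma> m" "0 < m"
  shows "{y. y ^ m = 1} = (\<lambda>k. \<gamma> ^ k) ` {..<m}"
proof -
  define P :: "'a poly" where "P = [:-1:] + Polynomial.monom 1 m"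
  have "degree P = m"
    unfolding P_def using assms(2) by (subst degree_add_eq_right) (auto simp: degree_monom_eq)
  then have P: "P \<noteq> 0" "degree P = m" "poly P y = 0 \<longleftrightarrow> y ^ m = 1" for y
    using assms(2) by (auto simp: P_def poly_monom)
  have "(\<gamma> ^ k) ^ m = 1" for k
    using assms(1) by (metis prim_root_def power_mult mult.commute power_one)
  then have powers_sub: "(\<lambda>k. \<gamma> ^ k) ` {..<m} \<subseteq> {y. y ^ m = 1}"
    by auto
  have "card ((\<lambda>k. \<gamma> ^ k) ` {..<m}) = m"
    using card_image[OF inj_on_prim_root_power[OF assms]] by simp
  moreover have "card {y :: 'a. y ^ m = 1} \<le> m"
    using card_poly_roots_bound[OF P(1)] by (simp add: P)
  moreover have "finite {y :: 'a. y ^ m = 1}"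
    using poly_roots_finite[OF P(1)] P(3) by simp
  ultimately show ?thesis
    using card_seteq[OF _ powers_sub] by simp
qed

lemma cyc_coset_subset_lessThan: "0 < N \<Longrightarrow> cyc_coset r N \<subseteq> {..<N}"
  unfolding cyc_coset_def by auto

lemma finite_cyc_coset: "0 < N \<Longrightarrow> finite (cyc_coset r N)"
  using cyc_coset_subset_lessThan finite_subset by blast

lemma coprime_power_cong_1:
  fixes a n :: nat
  assumes "coprime a n" "0 < n"
  shows "\<exists>e>0. [a ^ e = 1] (mod n)"
proof -
  have "(\<lambda>k. a ^ k mod n) ` {..n} \<subseteq> {..<n}"
    using assms(2) by auto
  then have "card ((\<lambda>k. a ^ k mod n) ` {..n}) < card {..n}"
    by (metis card_lessThan card_atMost card_mono finite_lessThan le_imp_less_Suc)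
  then have "\<not> inj_on (\<lambda>k. a ^ k mod n) {..n}"
    by (rule pigeonhole)
  then obtain k l where "k \<noteq> l" "a ^ k mod n = a ^ l mod n"
    unfolding inj_on_def by blast
  then obtain k l where kl: "k < l" "a ^ k mod n = a ^ l mod n"
    by (metis linorder_neqE_nat)
  moreover have "a ^ k * a ^ (l - k) = a ^ l"
    using kl(1) by (simp flip: power_add)
  ultimately have "[a ^ k * 1 = a ^ k * a ^ (l - k)] (mod n)"
    by (simp only: cong_def mult_1_right)
  then have "[1 = a ^ (l - k)] (mod n)"
    using assms(1) cong_mult_lcancel_nat[of "a ^ k" n 1 "a ^ (l - k)"] by simp
  then show ?thesis
    using kl(1) by (auto intro!: exI[of _ "l - k"] simp: cong_sym_eq)
qed

lemma cyc_coset_self: "r < N \<Longrightarrow> r \<in> cyc_coset r N"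
  unfolding cyc_coset_def by (auto intro: exI[of _ 0])

lemma cyc_coset_trans:
  assumes "j \<in> cyc_coset i N" "i \<in> cyc_coset r N"
  shows "j \<in> cyc_coset r N"
proof -
  obtain k l where "j = i * 2 ^ k mod N" "i = r * 2 ^ l mod N"
    using assms unfolding cyc_coset_def by blast
  then have "j = r * 2 ^ (l + k) mod N"
    by (simp add: mod_mult_left_eq power_add mult.assoc)
  then show ?thesis
    unfolding cyc_coset_def by blast
qed

lemma cyc_coset_sym:
  assumes "odd N" "r < N" "j \<in> cyc_coset r N"
  shows "r \<in> cyc_coset j N"
proof -
  obtain k where k: "j = r * 2 ^ k mod N"
    using assms(3) unfolding cyc_coset_def by blast
  obtain e where "e > 0" "[2 ^ e = 1] (mod N)"
    using coprime_power_cong_1[of 2 N] assms(1) by (auto simp: odd_pos)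
  then have period: "[(2 ^ e) ^ k = 1] (mod N)"
    by (metis cong_pow power_one)
  have "e * k = k + (e - 1) * k"
    using \<open>e > 0\<close> by (cases e) auto
  then have "[r = r * 2 ^ k * 2 ^ ((e - 1) * k)] (mod N)"
    using period by (metis cong_scalar_left cong_sym mult_1_right power_mult power_add mult.assoc)
  also have "[r * 2 ^ k * 2 ^ ((e - 1) * k) = j * 2 ^ ((e - 1) * k)] (mod N)"
    unfolding k by (simp add: cong_def mod_mult_left_eq)
  finally show ?thesis
    using assms(2) unfolding cyc_coset_def cong_def by auto
qed

lemma cyc_coset_mod_dvd:
  assumes "m dvd N" "j \<in> cyc_coset i N" "i mod m \<in> cyc_coset r m"
  shows "j mod m \<in> cyc_coset r m"
proof -
  obtain k where "j = i * 2 ^ k mod N"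
    using assms(2) unfolding cyc_coset_def by blast
  then have "j mod m = (i mod m) * 2 ^ k mod m"
    using assms(1) by (simp add: mod_mod_cancel mod_mult_left_eq)
  then have "j mod m \<in> cyc_coset (i mod m) m"
    unfolding cyc_coset_def by blast
  then show ?thesis
    using assms(3) by (rule cyc_coset_trans)
qed

lemma poly_map_of_bit:
  "poly (map_poly of_bit c :: 'a::field poly) x = (\<Sum>k\<in>{k. coeff c k \<noteq> 0}. x ^ k)"
proof -
  have "poly (map_poly of_bit c) x = (\<Sum>k\<le>degree c. of_bit (coeff c k) * x ^ k)"
    by (simp add: poly_altdef degree_map_poly coeff_map_poly)
  also have "\<dots> = (\<Sum>k\<le>degree c. if coeff c k \<noteq> 0 then x ^ k else 0)"
    by (intro sum.cong) auto
  also have "\<dots> = (\<Sum>k\<in>{k\<in>{..degree c}. coeff c k \<noteq> 0}. x ^ k)"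
    by (rule sum.inter_filter[symmetric]) simp
  also have "{k\<in>{..degree c}. coeff c k \<noteq> 0} = {k. coeff c k \<noteq> 0}"
    by (auto intro: le_degree)
  finally show ?thesis .
qed

lemma poly_map_of_bit_power_2:
  fixes x :: "'a::field"
  assumes "CHAR('a) = 2"
  shows "poly (map_poly of_bit c) (x ^ 2 ^ K) = poly (map_poly of_bit c) x ^ 2 ^ K"
proof -
  have frobenius: "(\<Sum>k\<in>S. f k) ^ 2 ^ K = (\<Sum>k\<in>S. f k ^ 2 ^ K)" for S and f :: "nat \<Rightarrow> 'a"
    using freshmans_dream_sum'[where f = f and A = S and m = "2 ^ K" and n = K] assms by simp
  have "(x ^ 2 ^ K) ^ k = (x ^ k) ^ 2 ^ K" for k
    by (simp add: mult.commute flip: power_mult)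
  then show ?thesis
    unfolding poly_map_of_bit frobenius by simp
qed

lemma bit_poly_with_support:
  assumes "finite K"
  shows "\<exists>c :: bit poly. {k. coeff c k \<noteq> 0} = K"
proof
  show "{k. coeff (\<Sum>j\<in>K. Polynomial.monom (1::bit) j) k \<noteq> 0} = K"
    using assms by (simp add: coeff_sum coeff_monom)
qed

lemma degree_less_iff_support:
  assumes "0 < n"
  shows "degree p < n \<longleftrightarrow> (\<forall>k. coeff p k \<noteq> 0 \<longrightarrow> k < n)"
proof
  show "degree p < n \<Longrightarrow> \<forall>k. coeff p k \<noteq> 0 \<longrightarrow> k < n"
    using le_degree le_less_trans by blast
  show "\<forall>k. coeff p k \<noteq> 0 \<longrightarrow> k < n \<Longrightarrow> degree p < n"
    using assms by (intro degree_lessI) (auto simp: not_less[symmetric])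
qed

lemma prod_linear_factors_dvd:
  fixes p :: "'a::field poly"
  assumes "finite A" "\<forall>y\<in>A. poly p y = 0"
  shows "(\<Prod>y\<in>A. [:-y, 1:]) dvd p"
  using assms
proof (induction A rule: finite_induct)
  case empty
  then show ?case by simp
next
  case (insert a A)
  then obtain q where q: "p = (\<Prod>y\<in>A. [:-y, 1:]) * q"
    by (auto elim: dvdE)
  have "poly (\<Prod>y\<in>A. [:-y, 1:]) a \<noteq> 0"
    using insert.hyps by (auto simp: poly_prod)
  with insert.prems q have "[:-a, 1:] dvd q"
    by (simp add: poly_eq_0_iff_dvd)
  then have "[:-a, 1:] * (\<Prod>y\<in>A. [:-y, 1:]) dvd p"
    unfolding q by (metis mult_dvd_mono dvd_refl mult.commute)
  then show ?case
    using insert.hyps by (simp add: prod.insert del: mult_pCons_left)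
qed

lemma poly_min_poly_self:
  assumes "i < n"
  shows "poly (min_poly \<alpha> n i) (\<alpha> ^ i) = 0"
  using assms cyc_coset_self finite_cyc_coset[of n i]
  by (auto simp: min_poly_def poly_prod)

lemma prod_min_poly_dvd:
  fixes \<alpha> :: "'a::field"
  assumes "prim_root \<alpha> n" "odd n" "finite T"
    and "\<forall>t\<in>T. i t < n"
    and "\<forall>t\<in>T. \<forall>u\<in>T. t \<noteq> u \<longrightarrow> i u \<notin> cyc_coset (i t) n"
    and "\<forall>t\<in>T. \<forall>j\<in>cyc_coset (i t) n. poly p (\<alpha> ^ j) = 0"
  shows "(\<Prod>t\<in>T. min_poly \<alpha> n (i t)) dvd p"
proof -
  have "0 < n"
    using assms(2) by (simp add: odd_pos)
  define C where "C t = cyc_coset (i t) n" for t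
  have disjoint: "C t \<inter> C u = {}" if "t \<in> T" "u \<in> T" "t \<noteq> u" for t u
  proof -
    have "i u \<in> cyc_coset (i t) n" if "j \<in> C t" "j \<in> C u" for j
      using that assms(2,4) \<open>u \<in> T\<close> unfolding C_def by (blast intro: cyc_coset_sym cyc_coset_trans)
    then show ?thesis
      using assms(5) that by blast
  qed
  define U where "U = (\<Union>t\<in>T. C t)"
  have "U \<subseteq> {..<n}"
    using cyc_coset_subset_lessThan[OF \<open>0 < n\<close>] by (auto simp: U_def C_def)
  then have U: "finite U" "inj_on (\<lambda>j. \<alpha> ^ j) U"
    using inj_on_prim_root_power[OF assms(1) \<open>0 < n\<close>] by (auto intro: finite_subset inj_on_subset)
  have "(\<Prod>t\<in>T. min_poly \<alpha> n (i t)) = (\<Prod>t\<in>T. \<Prod>j\<in>C t. [:-(\<alpha> ^ j), 1:])"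
    by (simp add: min_poly_def C_def)
  also have "\<dots> = (\<Prod>j\<in>U. [:-(\<alpha> ^ j), 1:])"
    unfolding U_def using assms(3) disjoint \<open>0 < n\<close>
    by (intro prod.UNION_disjoint[symmetric]) (auto simp: C_def finite_cyc_coset)
  also have "\<dots> = (\<Prod>y\<in>(\<lambda>j. \<alpha> ^ j) ` U. [:-y, 1:])"
    using prod.reindex[OF U(2), of "\<lambda>y. [:-y, 1:]"] by simp
  also have "\<dots> dvd p"
    using U(1) assms(6) by (intro prod_linear_factors_dvd) (auto simp: U_def C_def)
  finally show ?thesis .
qed

lemma min_dist_le_weight: "c \<in> C \<Longrightarrow> c \<noteq> 0 \<Longrightarrow> min_dist C \<le> weight c"
  unfolding min_dist_def by (rule Least_le) blast

lemma min_dist_eqI: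
  assumes "c \<in> C" "c \<noteq> 0" "weight c = w" "\<forall>c\<in>C. c \<noteq> 0 \<longrightarrow> w \<le> weight c"
  shows "min_dist C = w"
  unfolding min_dist_def using assms by (intro Least_equality) auto

lemma CHAR_2_add_self:
  assumes "CHAR('a::ring_1) = 2"
  shows "(x :: 'a) + x = 0"
  using uminus_CHAR_2[OF assms, of x] by (metis add.right_inverse)

lemma CHAR_2_one_plus_prim_root:
  fixes \<gamma> :: "'a::field"
  assumes char2: "CHAR('a) = 2" and \<gamma>: "prim_root \<gamma> m" and m: "m = 2 ^ g - 1" "1 < m"
  shows "\<exists>b. 1 < b \<and> b < m \<and> 1 + \<gamma> = \<gamma> ^ b"
proof -
  have "\<gamma> \<noteq> 1" "\<gamma> \<noteq> 0"
    using \<gamma> m(2) prim_root_nonzero[OF \<gamma>] by (auto simp: prim_root_def)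
  then have "1 + \<gamma> \<noteq> 0"
    using char2 by (metis CHAR_2_add_self add_right_cancel)
  have "2 ^ g = m + 1"
    using m by simp
  \<comment> \<open>\<open>1 + \<gamma>\<close> is fixed by the Frobenius map \<open>x \<mapsto> x ^ 2 ^ g\<close>, which fixes \<open>\<gamma>\<close>.\<close>
  then have "(1 + \<gamma>) ^ (m + 1) = 1 + \<gamma>"
    using freshmans_dream'[of "2 ^ g" g 1 \<gamma>] char2 \<gamma> by (simp add: prim_root_def)
  then have "(1 + \<gamma>) ^ m = 1"
    using \<open>1 + \<gamma> \<noteq> 0\<close> by simp
  then obtain b where b: "b < m" "1 + \<gamma> = \<gamma> ^ b"
    using roots_of_unity_eq_prim_root_powers[OF \<gamma>] m(2) by auto
  moreover have "b \<noteq> 0 \<and> b \<noteq> 1"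
  proof (intro conjI notI)
    show False if "b = 0"
      using b(2) \<open>\<gamma> \<noteq> 0\<close> that by simp
    show False if "b = 1"
      using b(2) that by simp
  qed
  ultimately show ?thesis
    by (intro exI[of _ b]) auto
qed

lemma prim_root_power_binomial_root_dvd:
  fixes \<alpha> :: "'a::field"
  assumes char2: "CHAR('a) = 2" and \<alpha>: "prim_root \<alpha> n" "0 < n"
    and "a \<le> b" and root: "(\<alpha> ^ j) ^ a + (\<alpha> ^ j) ^ b = 0"
  shows "n dvd j * (b - a)"
proof -
  define y where "y = \<alpha> ^ j"
  have "y \<noteq> 0"
    using prim_root_nonzero[OF \<alpha>] by (simp add: y_def)
  have "y ^ a * (1 + y ^ (b - a)) = 0"
    using root \<open>a \<le> b\<close> by (simp add: y_def distrib_left flip: power_add)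
  then have "y ^ (b - a) = - 1"
    using \<open>y \<noteq> 0\<close> by (simp add: eq_neg_iff_add_eq_0 add.commute)
  then have "\<alpha> ^ (j * (b - a)) = 1"
    using uminus_CHAR_2[OF char2, of 1] by (simp add: y_def power_mult)
  then show ?thesis
    using prim_root_pow_eq_1_iff[OF \<alpha>] by simp
qed

lemma cyclic_code_has_weight_3_word:
  fixes \<alpha> :: "'a::field"
  assumes char2: "CHAR('a) = 2" and \<alpha>: "prim_root \<alpha> n" and "odd n"
    and m: "m = 2 ^ g - 1" "1 < m" "m dvd n" and "coprime r m"
    and T: "finite T" "\<forall>t\<in>T. i t < n" "\<forall>t\<in>T. \<forall>u\<in>T. t \<noteq> u \<longrightarrow> i u \<notin> cyc_coset (i t) n"
    and i_in: "\<forall>t\<in>T. i t mod m \<in> cyc_coset r m"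
  shows "\<exists>c\<in>cyclic_code n (\<Prod>t\<in>T. min_poly \<alpha> n (i t)). c \<noteq> 0 \<and> weight c = 3"
proof -
  obtain N where N: "n = m * N"
    using m(3) by blast
  have "0 < n" "0 < N"
    using \<open>odd n\<close> N by (auto simp: odd_pos)
  define \<gamma> where "\<gamma> = \<alpha> ^ (N * r)"
  have "prim_root \<gamma> m"
    unfolding \<gamma>_def using \<alpha> \<open>0 < n\<close> \<open>coprime r m\<close> N by (intro prim_root_power_coprime) auto
  then obtain b where b: "1 < b" "b < m" "1 + \<gamma> = \<gamma> ^ b"
    using CHAR_2_one_plus_prim_root[OF char2 _ m(1,2)] by blast
  define S where "S = {0, N, b * N}"
  have S: "finite S" "card S = 3"
    using b \<open>0 < N\<close> by (auto simp: S_def)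
  then obtain c :: "bit poly" where c: "{k. coeff c k \<noteq> 0} = S"
    using bit_poly_with_support by blast
  have poly_c: "poly (map_poly of_bit c) x = 1 + x ^ N + (x ^ N) ^ b" for x :: 'a
    unfolding poly_map_of_bit c S_def using b \<open>0 < N\<close> by (simp add: power_mult mult.commute)
  have c_coeff: "coeff c k \<noteq> 0 \<longleftrightarrow> k \<in> S" for k
    using c by blast
  have "c \<noteq> 0"
    using c by (auto simp: S_def)
  have "degree c < n"
    unfolding degree_less_iff_support[OF \<open>0 < n\<close>] c_coeff using b N \<open>0 < N\<close> by (auto simp: S_def)
  have "poly (map_poly of_bit c) (\<alpha> ^ j) = 0" if t: "t \<in> T" and j: "j \<in> cyc_coset (i t) n" for t j
  proof -
    obtain K where K: "j mod m = r * 2 ^ K mod m"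
      using cyc_coset_mod_dvd[OF m(3) j] i_in t unfolding cyc_coset_def by blast
    have "[N * j = N * (r * 2 ^ K)] (mod n)"
      using K N by (simp add: cong_def mult.commute flip: mult_mod_right)
    then have "(\<alpha> ^ j) ^ N = ((\<alpha> ^ r) ^ 2 ^ K) ^ N"
      using prim_root_pow_eq_pow_iff[OF \<alpha> \<open>0 < n\<close>] by (simp add: mult.commute flip: power_mult)
    then have "poly (map_poly of_bit c) (\<alpha> ^ j) = poly (map_poly of_bit c) ((\<alpha> ^ r) ^ 2 ^ K)"
      by (simp only: poly_c)
    also have "\<dots> = poly (map_poly of_bit c) (\<alpha> ^ r) ^ 2 ^ K"
      by (rule poly_map_of_bit_power_2[OF char2])
    also have "poly (map_poly of_bit c) (\<alpha> ^ r) = (1 + \<gamma>) + \<gamma> ^ b"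
      unfolding poly_c \<gamma>_def by (simp add: mult.commute flip: power_mult)
    also have "\<dots> = 0"
      unfolding b(3) by (rule CHAR_2_add_self[OF char2])
    finally show ?thesis
      by simp
  qed
  then have "(\<Prod>t\<in>T. min_poly \<alpha> n (i t)) dvd map_poly of_bit c"
    using \<alpha> \<open>odd n\<close> T by (intro prod_min_poly_dvd) auto
  then show ?thesis
    using \<open>degree c < n\<close> \<open>c \<noteq> 0\<close> c S by (auto simp: cyclic_code_def weight_def)
qed

lemma cyclic_code_weight_ge_3:
  fixes \<alpha> :: "'a::field" and G :: "'a poly"
  assumes char2: "CHAR('a) = 2" and \<alpha>: "prim_root \<alpha> n" and "1 < n"
    and gcd: "Gcd (insert n J) = 1" and roots: "\<forall>j\<in>J. poly G (\<alpha> ^ j) = 0"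
    and c: "c \<in> cyclic_code n G" "c \<noteq> 0"
  shows "3 \<le> weight c"
proof (rule ccontr)
  assume "\<not> 3 \<le> weight c"
  define S where "S = {k. coeff c k \<noteq> 0}"
  have "0 < n"
    using \<open>1 < n\<close> by simp
  have S_less: "\<forall>k\<in>S. k < n"
    using c(1) by (simp add: cyclic_code_def S_def degree_less_iff_support[OF \<open>0 < n\<close>])
  then have "finite S"
    by (meson finite_lessThan finite_subset lessThan_iff subsetI)
  moreover have "degree c \<in> S"
    using c(2) by (simp add: S_def)
  ultimately have "card S = 1 \<or> card S = 2"
    using \<open>\<not> 3 \<le> weight c\<close> by (cases "card S") (auto simp: weight_def S_def[symmetric])
  have vanish: "(\<Sum>k\<in>S. (\<alpha> ^ j) ^ k) = 0" if "j \<in> J" for j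
  proof -
    have "G dvd map_poly of_bit c"
      using c(1) by (simp add: cyclic_code_def)
    then have "poly (map_poly of_bit c) (\<alpha> ^ j) = 0"
      using roots that by (auto elim!: dvdE)
    then show ?thesis
      by (simp only: poly_map_of_bit S_def)
  qed
  obtain j where "j \<in> J"
    using gcd \<open>1 < n\<close> by fastforce
  from \<open>card S = 1 \<or> card S = 2\<close> show False
  proof
    assume "card S = 1"
    then obtain a where "S = {a}"
      by (rule card_1_singletonE)
    then show False
      using vanish[OF \<open>j \<in> J\<close>] prim_root_nonzero[OF \<alpha> \<open>0 < n\<close>] by simp
  next
    assume "card S = 2"
    then obtain a b where ab: "S = {a, b}" "a < b"
      by (metis card_2_iff insert_commute linorder_neqE_nat)
    have "n dvd (b - a) * x" if "x \<in> insert n J" for x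
      using that vanish ab prim_root_power_binomial_root_dvd[OF char2 \<alpha> \<open>0 < n\<close>, of a b]
      by (auto simp: mult.commute)
    then have "n dvd Gcd ((*) (b - a) ` insert n J)"
      by (auto intro: Gcd_greatest)
    also have "Gcd ((*) (b - a) ` insert n J) = b - a"
      by (simp only: Gcd_mult gcd) simp
    finally have "n \<le> b - a"
      using ab(2) by (simp add: dvd_imp_le)
    then show False
      using S_less ab by auto
  qed
qed

theorem theorem4:
  fixes \<alpha> :: "'a::field" and n s g r :: nat and i :: "nat \<Rightarrow> nat"
  assumes char2: "CHAR('a) = 2"
    and n_odd: "odd n" and n_pos: "0 < n"
    and alpha: "prim_root \<alpha> n"
    and i_range: "\<forall>t\<in>{1..s}. i t \<le> n - 1"
    and i_mono: "\<forall>t\<in>{1..s}. \<forall>u\<in>{1..s}. t < u \<longrightarrow> i t < i u"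
    and i_cosets: "\<forall>t\<in>{1..s}. \<forall>u\<in>{1..s}. t \<noteq> u \<longrightarrow> i u \<notin> cyc_coset (i t) n"
    and g_pos: "0 < g"
    and g_dvd: "(2 ^ g - 1) dvd n"
    and r_bounds: "0 < r" "r < 2 ^ g - 1"
    and r_coprime: "coprime r (2 ^ g - 1)"
    and i_in: "\<forall>t\<in>{1..s}. i t mod (2 ^ g - 1) \<in> cyc_coset r (2 ^ g - 1)"
  shows "min_dist (cyclic_code n (\<Prod>t\<in>{1..s}. min_poly \<alpha> n (i t))) \<le> 3
     \<and> (Gcd (insert n (i ` {1..s})) = 1
          \<longrightarrow> min_dist (cyclic_code n (\<Prod>t\<in>{1..s}. min_poly \<alpha> n (i t))) = 3)"
proof -
  define G where "G = (\<Prod>t\<in>{1..s}. min_poly \<alpha> n (i t))"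
  have i_less: "\<forall>t\<in>{1..s}. i t < n"
    using i_range n_pos by fastforce
  have "1 < (2::nat) ^ g - 1" "1 < n"
    using r_bounds g_dvd n_pos by (auto dest: dvd_imp_le)
  then obtain c where c: "c \<in> cyclic_code n G" "c \<noteq> 0" "weight c = 3"
    using cyclic_code_has_weight_3_word[OF char2 alpha n_odd refl _ g_dvd r_coprime _ i_less i_cosets i_in]
    unfolding G_def by auto
  have "\<forall>j\<in>i ` {1..s}. poly G (\<alpha> ^ j) = 0"
    using i_less by (force simp: G_def poly_prod poly_min_poly_self)
  then have "Gcd (insert n (i ` {1..s})) = 1 \<Longrightarrow> \<forall>c\<in>cyclic_code n G. c \<noteq> 0 \<longrightarrow> 3 \<le> weight c"
    using cyclic_code_weight_ge_3[OF char2 alpha \<open>1 < n\<close>] by blast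
  then show ?thesis
    using min_dist_le_weight[OF c(1,2)] min_dist_eqI[OF c] unfolding G_def c(3) by auto
qed

end
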